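(* Let $A$ be an eNTA with a single clock $x$, and let $\gamma = q_0\tau_1 q_1\tau_2\cdots\tau_n q_n$ be a reachable path of $A$. For $1\le i\le n$ let $T_i$ be the set of times at which the $i$-th transition $\tau_i$ is taken, over all runs along $\gamma$, and let $s_i^{\gamma} := \sup T_i - \inf T_i \in \mathbb{R}_{\ge 0}\cup\{\infty\}$. Let $d_i^{\gamma}$ be the feasible durations and $w_i^{\gamma}$ the trail widths defined in the context. Then for every $1\le i\le n$, $$ s_i^{\gamma} = w_{i-1}^{\gamma} + d_i^{\gamma}, $$ and $$ w_i^{\gamma} = \begin{cases} 0 & \text{if } i=0,\\ s_i^{\gamma} & \text{if } i>0 \text{ and } x \text{ is reset on } \tau_i,\\ w_{i-1}^{\gamma} & \text{otherwise.}\end{cases} $$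
   Context: **Automata.** An eNTA (non-deterministic timed automaton with silent transitions) is a tuple $A=(\mathcal{Q},q_0,\Sigma_\epsilon,\mathcal{C},\mathcal{T})$ with the following components. - $\mathcal{Q}$ is a finite set of locations and $q_0\in\mathcal Q$ is the initial location. - $\Sigma$ is a finite set of observable actions, and $\Sigma_\epsilon=\Sigma\cup\{\epsilon\}$, where $\epsilon$ is the silent action. - $\mathcal{C}$ is a finite set of clocks. - $\mathcal{T}$ is a finite set of transitions $(q,a,g,\mathcal{C}_{rst},q')$. Here $q,q'\in\mathcal Q$, $a\in\Sigma_\epsilon$, $\mathcal{C}_{rst}\subseteq\mathcal C$ is the set of clocks reset, and the guard $g$ is a finite conjunction of constraints $c\sim n$ with $c\in\mathcal C$, $\sim\in\{<,\le,=,\ge,>\}$ and $n\in\mathbb{N}_0$. **Valuations and runs.** A valuation is a map $v:\mathcal C\to\mathbb{R}_{\ge0}$. We write $(v+d)(c)=v(c)+d$, and $v[\mathcal C_{rst}]$ for the valuation that sets the clocks in $\mathcal C_{rst}$ to $0$ and leaves the others unchanged. A run is a finite sequence $$(q_0,\mathbf 0)\xrightarrow{d_1}(q_0,\mathbf 0+d_1)\xrightarrow{\tau_1}(q_1,v_1)\xrightarrow{d_2}\cdots\xrightarrow{\tau_k}(q_k,v_k),$$ where $d_i\ge0$, $\tau_i=(q_{i-1},a_i,g_i,\mathcal C_i,q_i)\in\mathcal T$, $v_0=\mathbf 0$, $v_{i-1}+d_i\models g_i$ and $v_i=(v_{i-1}+d_i)[\mathcal C_i]$. The transition $\tau_i$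 is taken at time $t_i=d_1+\cdots+d_i$. **Paths.** A path $\gamma=q_0\tau_1q_1\cdots\tau_nq_n$ is a sequence of transitions with $\tau_i$ going from $q_{i-1}$ to $q_i$. A run along $\gamma$ is a run whose transitions are exactly $\tau_1,\dots,\tau_n$ in this order, and $\gamma$ is reachable if some run along it exists. **Feasible durations $d_i^\gamma$.** Let $l_i^\gamma$ and $u_i^\gamma$ be the lower and upper bounds imposed on $x$ by the guard of $\tau_i$, with $l_i^\gamma=u_i^\gamma$ for an equality constraint, $l_i^\gamma=0$ if there is no lower bound, and $u_i^\gamma=\infty$ if there is no upper bound. 1. Forward adjustment: for $i=1,\dots,n-1$ in increasing order, if $x$ is not reset on $\tau_i$ and $l_{i+1}^\gamma<l_i^\gamma$, set $l_{i+1}^\gamma:=l_i^\gamma$. 2. Backward adjustment: for $i=n-1,\dots,1$ in decreasing order, if $x$ is not reset on $\tau_i$ and $u_i^\gamma>u_{i+1}^\gamma$, set $u_i^\gamma:=u_{i+1}^\gamma$. 3. Define $d_i^\gamma:=\max\{u_i^\gamma-l_i^\gamma,0\}$. **Trail widths $w_i^\gamma$.** The trail of $\gamma$ is the set of all points $(t,x)$ visited by the runs along $\gamma$, where $t$ is the global elapsed time. For $0\le i\le n$, $w_i^\gamma$ is the width of the trail after the $i$-th transition. Concretely, let $j\le i$ be the largest index such that $x$ is reset on $\tau_j$. If such a $j$ exists, $w_i^\gamma:=s_j^\gamma$, the length of the set of times at which $x$ was last reset. If no such $j$ exists (so $x$ was last set to $0$ at time $0$), $w_i^\gamma:=0$.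 *)

theory Defs
  imports Complex_Main "HOL-Library.Extended_Real"
begin

datatype cmp = Lt | Le | Eq | Ge | Gt

text \<open>A clock constraint on the unique clock x: (comparison, constant).
  A guard is a finite conjunction (list) of such constraints.\<close>
type_synonym guard = "(cmp \<times> nat) list"

text \<open>A transition (q, a, g, reset, q'); the action is None for the silent
  action epsilon; since there is a single clock x, the reset set is encoded
  by a boolean (True iff x is reset).\<close>
type_synonym ('q, 'a) trans = "'q \<times> 'a option \<times> guard \<times> bool \<times> 'q"

definition src :: "('q, 'a) trans \<Rightarrow> 'q" where "src t = fst t"
definition act :: "('q, 'a) trans \<Rightarrow> 'a option" where "act t = fst (snd t)"
definition grd :: "('q, 'a) trans \<Rightarrow> guard" where "grd t = fst (snd (snd t))"
definition rst :: "('q, 'a) trans \<Rightarrow> bool" where "rst t = fst (snd (snd (snd t)))"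
definition tgt :: "('q, 'a) trans \<Rightarrow> 'q" where "tgt t = snd (snd (snd (snd t)))"

definition enta :: "'q set \<Rightarrow> 'q \<Rightarrow> 'a set \<Rightarrow> ('q, 'a) trans set \<Rightarrow> bool" where
  "enta Q q0 Sig Tr \<longleftrightarrow> finite Q \<and> q0 \<in> Q \<and> finite Sig \<and> finite Tr \<and>
     (\<forall>t\<in>Tr. src t \<in> Q \<and> tgt t \<in> Q \<and> (act t = None \<or> the (act t) \<in> Sig))"

fun cmp_sat :: "cmp \<Rightarrow> real \<Rightarrow> nat \<Rightarrow> bool" where
  "cmp_sat Lt v n = (v < real n)"
| "cmp_sat Le v n = (v \<le> real n)"
| "cmp_sat Eq v n = (v = real n)"
| "cmp_sat Ge v n = (v \<ge> real n)"
| "cmp_sat Gt v n = (v > real n)"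

definition sat :: "guard \<Rightarrow> real \<Rightarrow> bool" where
  "sat g v \<longleftrightarrow> (\<forall>(c, n) \<in> set g. cmp_sat c v n)"

text \<open>A path from q0 given as its list of transitions tau_1 ... tau_n.\<close>
definition is_path :: "('q, 'a) trans set \<Rightarrow> 'q \<Rightarrow> ('q, 'a) trans list \<Rightarrow> bool" where
  "is_path Tr q0 ts \<longleftrightarrow> set ts \<subseteq> Tr \<and> (ts \<noteq> [] \<longrightarrow> src (ts ! 0) = q0) \<and>
     (\<forall>i. Suc i < length ts \<longrightarrow> tgt (ts ! i) = src (ts ! Suc i))"

text \<open>run_ok v ts ds: starting with clock value v, the delays ds (one per
  transition) give a run taking exactly the transitions ts in order.\<close>
fun run_ok :: "real \<Rightarrow> ('q, 'a) trans list \<Rightarrow> real list \<Rightarrow> bool" where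
  "run_ok v [] [] = True"
| "run_ok v (t # ts) (d # ds) =
     (d \<ge> 0 \<and> sat (grd t) (v + d) \<and> run_ok (if rst t then 0 else v + d) ts ds)"
| "run_ok _ _ _ = False"

definition run_along :: "('q, 'a) trans list \<Rightarrow> real list \<Rightarrow> bool" where
  "run_along ts ds \<longleftrightarrow> run_ok 0 ts ds"

definition reachable_path :: "('q, 'a) trans list \<Rightarrow> bool" where
  "reachable_path ts \<longleftrightarrow> (\<exists>ds. run_along ts ds)"

text \<open>T_i: times at which the i-th transition (1-based) is taken over all runs.\<close>
definition Ttimes :: "('q, 'a) trans list \<Rightarrow> nat \<Rightarrow> real set" where
  "Ttimes ts i = {sum_list (take i ds) | ds. run_along ts ds}"

definition s_len :: "('q, 'a) trans list \<Rightarrow> nat \<Rightarrow> ereal" where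
  "s_len ts i = Sup (ereal ` Ttimes ts i) - Inf (ereal ` Ttimes ts i)"

definition lbound :: "guard \<Rightarrow> real" where
  "lbound g = Max (insert 0 {real n | c n. (c, n) \<in> set g \<and> c \<in> {Eq, Ge, Gt}})"

definition ubound :: "guard \<Rightarrow> ereal" where
  "ubound g = Min (insert \<infinity> {ereal (real n) | c n. (c, n) \<in> set g \<and> c \<in> {Eq, Le, Lt}})"

text \<open>Forward adjustment of the lower bounds (processed in increasing order);
  the argument carries the adjusted bound of the previous transition if x
  was not reset on it.\<close>
fun lower_adj :: "real option \<Rightarrow> ('q, 'a) trans list \<Rightarrow> real list" where
  "lower_adj _ [] = []"
| "lower_adj prev (t # ts) =
     (let l = (case prev of None \<Rightarrow> lbound (grd t) | Some p \<Rightarrow> max (lbound (grd t)) p)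
      in l # lower_adj (if rst t then None else Some l) ts)"

fun upper_adj :: "('q, 'a) trans list \<Rightarrow> ereal list" where
  "upper_adj [] = []"
| "upper_adj (t # ts) =
     (let rest = upper_adj ts
      in (if rst t \<or> ts = [] then ubound (grd t) else min (ubound (grd t)) (hd rest)) # rest)"

text \<open>d_i (1-based).\<close>
definition dur :: "('q, 'a) trans list \<Rightarrow> nat \<Rightarrow> ereal" where
  "dur ts i = max (upper_adj ts ! (i - 1) - ereal (lower_adj None ts ! (i - 1))) 0"

definition width :: "('q, 'a) trans list \<Rightarrow> nat \<Rightarrow> ereal" where
  "width ts i =
     (if \<exists>j\<in>{1..i}. rst (ts ! (j - 1))
      then s_len ts (GREATEST j. j \<in> {1..i} \<and> rst (ts ! (j - 1)))
      else 0)"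

end

theory Submission
  imports Defs "HOL-Library.Set_Algebras"
begin

text \<open>
  Let \<open>m < i\<close> be the index of the last reset of \<open>x\<close> before \<open>\<tau>\<^sub>i\<close> (\<open>m = 0\<close> if there is
  none). Since \<open>x = 0\<close> right after \<open>\<tau>\<^sub>m\<close>, a run along the path is a run along
  \<open>\<tau>\<^sub>1 \<dots> \<tau>\<^sub>m\<close> followed by an independent run along the rest started with \<open>x = 0\<close>.
  Hence \<open>T\<^sub>i\<close> is the Minkowski sum of \<open>T\<^sub>m\<close> and the set \<open>B\<close> of times, counted from
  \<open>\<tau>\<^sub>m\<close>, at which \<open>\<tau>\<^sub>i\<close> can be taken, so \<open>s\<^sub>i = w\<^sub>i\<^sub>-\<^sub>1 + (sup B - inf B)\<close>.
  On the reset-free stretch \<open>\<tau>\<^sub>m\<^sub>+\<^sub>1 \<dots> \<tau>\<^sub>i\<close> the clock equals that elapsed time, and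
  the delays can be slid within the guards: \<open>B\<close> reaches down to the largest lower bound
  on the stretch (the forward-adjusted bound of \<open>\<tau>\<^sub>i\<close>) and up to the smallest upper bound
  before the next reset (the backward-adjusted one), so its length is \<open>d\<^sub>i\<close>.
\<close>

section \<open>Spreads of sets of reals\<close>

lemma ereal_image_set_plus:
  "ereal ` (A + B) = (\<lambda>p. ereal (fst p) + ereal (snd p)) ` (A \<times> B)"
  by (force simp: set_plus_def)

lemma Sup_ereal_set_plus:
  fixes A B :: "real set"
  assumes "A \<noteq> {}" "B \<noteq> {}"
  shows "Sup (ereal ` (A + B)) = Sup (ereal ` A) + Sup (ereal ` B)"
proof -
  have "Sup (ereal ` (A + B)) = (SUP a\<in>A. SUP b\<in>B. ereal a + ereal b)"
    unfolding ereal_image_set_plus SUP_pair image_image ..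
  also have "\<dots> = (SUP a\<in>A. ereal a + Sup (ereal ` B))"
    using SUP_ereal_add_right[OF assms(2)] by (simp del: plus_ereal.simps)
  also have "\<dots> = Sup (ereal ` A) + Sup (ereal ` B)"
  proof -
    have "Sup (ereal ` B) \<noteq> -\<infinity>"
      using assms(2) by (auto simp: Sup_eq_MInfty)
    then show ?thesis
      using SUP_ereal_add_left[OF assms(1)] by simp
  qed
  finally show ?thesis .
qed

lemma Inf_ereal_set_plus:
  fixes A B :: "real set"
  assumes "A \<noteq> {}" "B \<noteq> {}" "\<forall>a\<in>A. 0 \<le> a" "\<forall>b\<in>B. 0 \<le> b"
  shows "Inf (ereal ` (A + B)) = Inf (ereal ` A) + Inf (ereal ` B)"
proof -
  have "Inf (ereal ` (A + B)) = (INF a\<in>A. INF b\<in>B. ereal a + ereal b)"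
    unfolding ereal_image_set_plus INF_pair image_image ..
  also have "\<dots> = (INF a\<in>A. ereal a + Inf (ereal ` B))"
    using INF_ereal_add_right[OF assms(2)] assms(4) by (simp del: plus_ereal.simps)
  also have "\<dots> = Inf (ereal ` A) + Inf (ereal ` B)"
  proof -
    have "0 \<le> Inf (ereal ` B)"
      using assms(4) by (auto intro: Inf_greatest)
    then show ?thesis
      using INF_ereal_add_left[OF assms(1)] assms(3) by simp
  qed
  finally show ?thesis .
qed

lemma ereal_add_diff_add:
  "ereal a \<le> x \<Longrightarrow> ereal b \<le> y \<Longrightarrow> (x + y) - ereal (a + b) = (x - ereal a) + (y - ereal b)"
  by (cases x; cases y) auto

definition spread :: "real set \<Rightarrow> ereal" where
  "spread X = Sup (ereal ` X) - Inf (ereal ` X)"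

lemma spread_set_plus:
  fixes A B :: "real set"
  assumes "A \<noteq> {}" "B \<noteq> {}" "\<forall>a\<in>A. 0 \<le> a" "\<forall>b\<in>B. 0 \<le> b"
  shows "spread (A + B) = spread A + spread B"
proof -
  have finite_Inf: "\<exists>r. Inf (ereal ` X) = ereal r \<and> ereal r \<le> Sup (ereal ` X)"
    if nonempty: "X \<noteq> {}" and nonneg: "\<forall>x\<in>X. 0 \<le> x" for X :: "real set"
  proof -
    obtain x where "x \<in> X" using nonempty by blast
    then have "Inf (ereal ` X) \<le> ereal x"
      by (auto intro: Inf_lower)
    moreover have "Inf (ereal ` X) \<le> Sup (ereal ` X)"
      using nonempty by (simp add: Inf_le_Sup)
    moreover have "0 \<le> Inf (ereal ` X)"
      using nonneg by (auto intro: Inf_greatest)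
    ultimately show ?thesis
      by (cases "Inf (ereal ` X)") auto
  qed
  obtain a b where "Inf (ereal ` A) = ereal a" "ereal a \<le> Sup (ereal ` A)"
    and "Inf (ereal ` B) = ereal b" "ereal b \<le> Sup (ereal ` B)"
    using finite_Inf assms by meson
  then show ?thesis
    unfolding spread_def Sup_ereal_set_plus[OF assms(1,2)] Inf_ereal_set_plus[OF assms]
    by (simp add: ereal_add_diff_add)
qed

lemma Sup_image_ereal_eqI:
  fixes B :: "real set"
  assumes "c \<in> B" "\<forall>b\<in>B. ereal b \<le> U" "\<forall>y. c \<le> y \<longrightarrow> ereal y < U \<longrightarrow> y \<in> B"
  shows "Sup (ereal ` B) = U"
proof (rule Sup_eqI)
  show "x \<le> U" if "x \<in> ereal ` B" for x
    using that assms(2) by auto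
next
  fix z assume upper: "\<And>x. x \<in> ereal ` B \<Longrightarrow> x \<le> z"
  show "U \<le> z"
  proof (rule ccontr)
    assume "\<not> U \<le> z"
    then have "z < U" by simp
    then obtain r where r: "z < ereal r" "ereal r < U"
      using ereal_dense2 by blast
    have "ereal c \<le> z"
      using upper assms(1) by blast
    then have "c \<le> r"
      using r(1) by (metis ereal_less_eq(3) le_less_trans less_imp_le)
    then have "r \<in> B"
      using assms(3) r(2) by blast
    then show False
      using upper r(1) by force
  qed
qed

lemma Inf_image_ereal_eqI:
  fixes B :: "real set"
  assumes "c \<in> B" "\<forall>b\<in>B. L \<le> b" "\<forall>y. L < y \<longrightarrow> y \<le> c \<longrightarrow> y \<in> B"
  shows "Inf (ereal ` B) = ereal L"
proof (rule Inf_eqI)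
  show "ereal L \<le> x" if "x \<in> ereal ` B" for x
    using that assms(2) by auto
next
  fix z assume lower: "\<And>x. x \<in> ereal ` B \<Longrightarrow> z \<le> x"
  show "z \<le> ereal L"
  proof (rule ccontr)
    assume "\<not> z \<le> ereal L"
    then have "ereal L < z" by simp
    then obtain r where r: "ereal L < ereal r" "ereal r < z"
      using ereal_dense2 by blast
    have "z \<le> ereal c"
      using lower assms(1) by blast
    then have "r \<le> c"
      using r(2) by (metis ereal_less_eq(3) less_le_trans less_imp_le)
    then have "r \<in> B"
      using assms(3) r(1) by simp
    then show False
      using lower r(2) by force
  qed
qed

lemma run_ok_Nil_left [simp]: "run_ok v [] ds \<longleftrightarrow> ds = []"
  by (cases ds) auto

lemma run_ok_length: "run_ok v ts ds \<Longrightarrow> length ds = length ts"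
  by (induction v ts ds rule: run_ok.induct) auto

lemma run_ok_nonneg: "run_ok v ts ds \<Longrightarrow> d \<in> set ds \<Longrightarrow> 0 \<le> d"
  by (induction v ts ds rule: run_ok.induct) auto

fun clock_after :: "real \<Rightarrow> ('q, 'a) trans list \<Rightarrow> real list \<Rightarrow> real" where
  "clock_after v (t # ts) (d # ds) = clock_after (if rst t then 0 else v + d) ts ds"
| "clock_after v _ _ = v"

lemma run_ok_append_take_drop:
  "run_ok v (xs @ ys) ds \<longleftrightarrow>
     run_ok v xs (take (length xs) ds) \<and>
     run_ok (clock_after v xs (take (length xs) ds)) ys (drop (length xs) ds)"
proof (induction xs arbitrary: v ds)
  case (Cons t xs)
  then show ?case by (cases ds) auto
qed simp

lemma run_ok_append:
  "run_ok v (xs @ ys) ds \<longleftrightarrow>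
     (\<exists>ds1 ds2. ds = ds1 @ ds2 \<and> run_ok v xs ds1 \<and> run_ok (clock_after v xs ds1) ys ds2)"
proof
  assume "run_ok v (xs @ ys) ds"
  then show "\<exists>ds1 ds2. ds = ds1 @ ds2 \<and> run_ok v xs ds1 \<and> run_ok (clock_after v xs ds1) ys ds2"
    unfolding run_ok_append_take_drop
    by (intro exI[of _ "take (length xs) ds"] exI[of _ "drop (length xs) ds"]) simp
next
  assume "\<exists>ds1 ds2. ds = ds1 @ ds2 \<and> run_ok v xs ds1 \<and> run_ok (clock_after v xs ds1) ys ds2"
  then obtain ds1 ds2 where "ds = ds1 @ ds2" "run_ok v xs ds1" "run_ok (clock_after v xs ds1) ys ds2"
    by blast
  moreover have "length ds1 = length xs"
    using run_ok_length[OF \<open>run_ok v xs ds1\<close>] .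
  ultimately show "run_ok v (xs @ ys) ds"
    unfolding run_ok_append_take_drop by simp
qed

lemma clock_after_reset:
  "run_ok v xs ds \<Longrightarrow> xs \<noteq> [] \<Longrightarrow> rst (last xs) \<Longrightarrow> clock_after v xs ds = 0"
proof (induction v xs ds rule: clock_after.induct)
  case (1 v t ts d ds)
  then show ?case by (cases ts) auto
qed (auto simp: neq_Nil_conv)

lemma clock_after_reset_free:
  "run_ok v xs ds \<Longrightarrow> \<forall>s\<in>set xs. \<not> rst s \<Longrightarrow> clock_after v xs ds = v + sum_list ds"
  by (induction v xs ds rule: clock_after.induct) auto

section \<open>Splitting a path after a reset\<close>

lemma run_along_append_reset:
  assumes "xs = [] \<or> rst (last xs)"
  shows "run_along (xs @ ys) ds \<longleftrightarrow>
    (\<exists>ds1 ds2. ds = ds1 @ ds2 \<and> run_along xs ds1 \<and> run_along ys ds2)"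
proof -
  have "clock_after 0 xs ds1 = 0" if "run_ok 0 xs ds1" for ds1
    using assms clock_after_reset[OF that] by (cases "xs = []") auto
  then show ?thesis unfolding run_along_def run_ok_append by metis
qed

lemma reachable_path_append_reset:
  assumes "xs = [] \<or> rst (last xs)" and "reachable_path (xs @ ys)"
  shows "reachable_path xs" "reachable_path ys"
  using assms unfolding reachable_path_def run_along_append_reset[OF assms(1)] by blast+

lemma Ttimes_append_reset:
  assumes "xs = [] \<or> rst (last xs)"
  shows "Ttimes (xs @ ys) (length xs + k) = Ttimes xs (length xs) + Ttimes ys k"
proof -
  have take: "take (length xs + k) (ds1 @ ds2) = ds1 @ take k ds2" "take (length xs) ds1 = ds1"
    if "run_along xs ds1" for ds1 ds2
    using that run_ok_length[of 0 xs ds1] by (simp_all add: run_along_def)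
  show ?thesis
  proof (intro equalityI subsetI)
    fix x assume "x \<in> Ttimes (xs @ ys) (length xs + k)"
    then obtain ds where "run_along (xs @ ys) ds" "x = sum_list (take (length xs + k) ds)"
      unfolding Ttimes_def by blast
    then obtain ds1 ds2 where runs: "run_along xs ds1" "run_along ys ds2"
      and "x = sum_list ds1 + sum_list (take k ds2)"
      using run_along_append_reset[OF assms] take by fastforce
    moreover have "sum_list ds1 \<in> Ttimes xs (length xs)" "sum_list (take k ds2) \<in> Ttimes ys k"
      unfolding Ttimes_def using runs take(2) by force+
    ultimately show "x \<in> Ttimes xs (length xs) + Ttimes ys k"
      by (simp add: set_plus_intro)
  next
    fix x assume "x \<in> Ttimes xs (length xs) + Ttimes ys k"
    then obtain ds1 ds2 where runs: "run_along xs ds1" "run_along ys ds2"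
      and "x = sum_list (take (length xs) ds1) + sum_list (take k ds2)"
      unfolding Ttimes_def set_plus_def by blast
    then have "x = sum_list (take (length xs + k) (ds1 @ ds2))"
      using take by simp
    moreover have "run_along (xs @ ys) (ds1 @ ds2)"
      using run_along_append_reset[OF assms] runs by blast
    ultimately show "x \<in> Ttimes (xs @ ys) (length xs + k)"
      unfolding Ttimes_def by blast
  qed
qed

lemma Ttimes_nonneg:
  assumes "x \<in> Ttimes ts i"
  shows "0 \<le> x"
proof -
  obtain ds where "run_ok 0 ts ds" "x = sum_list (take i ds)"
    using assms unfolding Ttimes_def run_along_def by blast
  then show ?thesis by (metis in_set_takeD run_ok_nonneg sum_list_nonneg)
qed

lemma Ttimes_nonempty: "reachable_path ts \<Longrightarrow> Ttimes ts i \<noteq> {}"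
  unfolding reachable_path_def Ttimes_def by blast

lemma Ttimes_0: "reachable_path ts \<Longrightarrow> Ttimes ts 0 = {0}"
  unfolding reachable_path_def Ttimes_def by auto

lemma s_len_eq_spread: "s_len ts i = spread (Ttimes ts i)"
  by (simp add: s_len_def spread_def)

lemma s_len_append_reset:
  assumes "xs = [] \<or> rst (last xs)" and "reachable_path (xs @ ys)"
  shows "s_len (xs @ ys) (length xs + k) = s_len (xs @ ys) (length xs) + s_len ys k"
proof -
  have "reachable_path xs" "reachable_path ys"
    using reachable_path_append_reset[OF assms] by blast+
  then have "Ttimes xs (length xs) \<noteq> {}" "Ttimes ys k \<noteq> {}" "Ttimes ys 0 = {0}"
    by (simp_all add: Ttimes_nonempty Ttimes_0)
  moreover have "s_len (xs @ ys) (length xs) = spread (Ttimes xs (length xs))"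
    using Ttimes_append_reset[OF assms(1), of ys 0] \<open>Ttimes ys 0 = {0}\<close>
    by (simp add: s_len_eq_spread)
  ultimately show ?thesis
    unfolding s_len_eq_spread Ttimes_append_reset[OF assms(1)]
    by (simp add: spread_set_plus Ttimes_nonneg)
qed

lemma finite_lbound_constants: "finite {real n | c n. (c, n) \<in> set g \<and> c \<in> {Eq, Ge, Gt}}"
  by (rule finite_subset[of _ "(\<lambda>(c, n). real n) ` set g"]) force+

lemma finite_ubound_constants: "finite {ereal (real n) | c n. (c, n) \<in> set g \<and> c \<in> {Eq, Le, Lt}}"
  by (rule finite_subset[of _ "(\<lambda>(c, n). ereal (real n)) ` set g"]) force+

lemma lbound_nonneg: "0 \<le> lbound g"
  unfolding lbound_def using finite_lbound_constants by (intro Max_ge) auto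

lemma lbound_ge_constant: "(c, n) \<in> set g \<Longrightarrow> c \<in> {Eq, Ge, Gt} \<Longrightarrow> real n \<le> lbound g"
  unfolding lbound_def using finite_lbound_constants by (intro Max_ge) auto

lemma ubound_le_constant: "(c, n) \<in> set g \<Longrightarrow> c \<in> {Eq, Le, Lt} \<Longrightarrow> ubound g \<le> ereal (real n)"
  unfolding ubound_def using finite_ubound_constants by (intro Min_le) auto

lemma lbound_le_sat:
  assumes "sat g a" "0 \<le> a"
  shows "lbound g \<le> a"
proof -
  have "\<forall>(c, n)\<in>set g. cmp_sat c a n"
    using assms(1) by (simp add: sat_def)
  then have "\<forall>x\<in>insert 0 {real n | c n. (c, n) \<in> set g \<and> c \<in> {Eq, Ge, Gt}}. x \<le> a"
    using assms(2) by fastforce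
  then show ?thesis
    unfolding lbound_def using finite_lbound_constants by simp
qed

lemma sat_le_ubound:
  assumes "sat g a"
  shows "ereal a \<le> ubound g"
proof -
  have "\<forall>(c, n)\<in>set g. cmp_sat c a n"
    using assms by (simp add: sat_def)
  then have "\<forall>x\<in>insert \<infinity> {ereal (real n) | c n. (c, n) \<in> set g \<and> c \<in> {Eq, Le, Lt}}. ereal a \<le> x"
    by fastforce
  then show ?thesis
    unfolding ubound_def using finite_ubound_constants by simp
qed

lemma sat_decrease:
  assumes "sat g a" "b \<le> a" "lbound g < b"
  shows "sat g b"
  unfolding sat_def
proof clarify
  fix c n assume cn: "(c, n) \<in> set g"
  then have "cmp_sat c a n" using assms(1) by (auto simp: sat_def)
  then show "cmp_sat c b n" using lbound_ge_constant[OF cn] assms(2,3) by (cases c) auto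
qed

lemma sat_increase:
  assumes "sat g a" "a \<le> b" "ereal b < ubound g"
  shows "sat g b"
  unfolding sat_def
proof clarify
  fix c n assume cn: "(c, n) \<in> set g"
  then have "cmp_sat c a n" using assms(1) by (auto simp: sat_def)
  moreover have "b < real n" if "c \<in> {Eq, Le, Lt}"
  proof -
    have "ereal b < ereal (real n)"
      using ubound_le_constant[OF cn that] assms(3) by (rule order_less_le_trans[rotated])
    then show ?thesis by simp
  qed
  ultimately show "cmp_sat c b n" using assms(2) by (cases c) auto
qed

lemma lower_adj_None_eq_Some_0: "lower_adj None ts = lower_adj (Some 0) ts"
  by (cases ts) (simp_all add: Let_def max_absorb1 lbound_nonneg)

lemma length_lower_adj [simp]: "length (lower_adj p ts) = length ts"
  by (induction ts arbitrary: p) (simp_all add: Let_def)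

lemma nth_lower_adj_reset_free:
  assumes "\<forall>s\<in>set pre. \<not> rst s"
  shows "lower_adj (Some q) (pre @ t # post) ! length pre =
    Max (insert q ((lbound \<circ> grd) ` set (pre @ [t])))"
  using assms
proof (induction pre arbitrary: q)
  case (Cons s pre)
  then show ?case by (simp add: Let_def max.assoc max.left_commute)
qed (simp add: Let_def max.commute)

lemma lower_adj_append_reset:
  "xs \<noteq> [] \<Longrightarrow> rst (last xs) \<Longrightarrow> lower_adj p (xs @ ys) = lower_adj p xs @ lower_adj None ys"
proof (induction xs arbitrary: p)
  case (Cons x xs)
  then show ?case by (cases "xs = []") (simp_all add: Let_def)
qed simp

lemma length_upper_adj [simp]: "length (upper_adj ts) = length ts"
  by (induction ts) (simp_all add: Let_def)

lemma drop_upper_adj: "drop k (upper_adj ts) = upper_adj (drop k ts)"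
proof (induction ts arbitrary: k)
  case (Cons t ts)
  then show ?case by (cases k) (simp_all add: Let_def)
qed simp

lemma dur_append_reset:
  assumes "xs = [] \<or> rst (last xs)" "0 < k"
  shows "dur (xs @ ys) (length xs + k) = dur ys k"
proof -
  have "lower_adj None (xs @ ys) = lower_adj None xs @ lower_adj None ys"
    using assms(1) lower_adj_append_reset by (cases "xs = []") auto
  moreover have "upper_adj (xs @ ys) ! (length xs + j) = upper_adj ys ! j" for j
  proof -
    have "upper_adj (xs @ ys) ! (length xs + j) = drop (length xs) (upper_adj (xs @ ys)) ! j"
      by simp
    then show ?thesis
      unfolding drop_upper_adj by simp
  qed
  moreover have "length xs + k - 1 = length xs + (k - 1)"
    using assms(2) by simp
  ultimately show ?thesis
    unfolding dur_def by (simp add: nth_append)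
qed

section \<open>Reset-free stretches\<close>

definition fires_at :: "real \<Rightarrow> ('q, 'a) trans \<Rightarrow> ('q, 'a) trans list \<Rightarrow> real list \<Rightarrow> bool" where
  "fires_at c t ts ds \<longleftrightarrow> sat (grd t) c \<and> run_ok (if rst t then 0 else c) ts ds"

lemma run_ok_Cons_fires_at:
  "run_ok v (t # ts) (d # ds) \<longleftrightarrow> 0 \<le> d \<and> fires_at (v + d) t ts ds"
  by (simp add: fires_at_def)

lemma fires_at_le_upper_adj: "fires_at c t ts ds \<Longrightarrow> ereal c \<le> hd (upper_adj (t # ts))"
proof (induction ts arbitrary: t c ds)
  case Nil
  then show ?case by (simp add: fires_at_def sat_le_ubound)
next
  case (Cons t' ts)
  show ?case
  proof (cases "rst t")
    case True
    then show ?thesis using Cons.prems by (simp add: fires_at_def sat_le_ubound)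
  next
    case False
    obtain d ds' where ds: "ds = d # ds'"
      using Cons.prems by (cases ds) (auto simp: fires_at_def)
    have "sat (grd t) c" "0 \<le> d" "fires_at (c + d) t' ts ds'"
      using Cons.prems False ds by (auto simp: fires_at_def run_ok_Cons_fires_at)
    have "ereal c \<le> ereal (c + d)"
      using \<open>0 \<le> d\<close> by simp
    also have "\<dots> \<le> hd (upper_adj (t' # ts))"
      using Cons.IH[OF \<open>fires_at (c + d) t' ts ds'\<close>] .
    finally have "ereal c \<le> hd (upper_adj (t' # ts))" .
    moreover have "ereal c \<le> ubound (grd t)"
      using sat_le_ubound[OF \<open>sat (grd t) c\<close>] .
    ultimately show ?thesis using False by (simp add: Let_def)
  qed
qed

text \<open>Up to the next reset every transition is re-timed to fire at the later of its old
  clock value and \<open>y\<close>, which stays below all upper bounds on that stretch.\<close>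

lemma fires_at_increase:
  assumes "fires_at c t ts ds" "c \<le> y" "ereal y < hd (upper_adj (t # ts))"
  shows "\<exists>ds'. fires_at y t ts ds'"
  using assms
proof (induction ts arbitrary: t c ds)
  case Nil
  then show ?case by (auto simp: fires_at_def intro: sat_increase)
next
  case (Cons t' ts)
  show ?case
  proof (cases "rst t")
    case True
    then show ?thesis using Cons.prems by (auto simp: fires_at_def Let_def intro: sat_increase)
  next
    case False
    obtain d ds' where ds: "ds = d # ds'"
      using Cons.prems by (cases ds) (auto simp: fires_at_def)
    have fires: "sat (grd t) c" "0 \<le> d" "fires_at (c + d) t' ts ds'"
      using Cons.prems False ds by (auto simp: fires_at_def run_ok_Cons_fires_at)
    have upper: "ereal y < ubound (grd t)" "ereal y < hd (upper_adj (t' # ts))"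
      using Cons.prems(3) False by (simp_all add: Let_def)
    have "sat (grd t) y"
      using sat_increase[OF fires(1) Cons.prems(2) upper(1)] .
    show ?thesis
    proof (cases "y \<le> c + d")
      case True
      then have "fires_at y t (t' # ts) ((c + d - y) # ds')"
        using \<open>sat (grd t) y\<close> fires(3) False by (auto simp: fires_at_def run_ok_Cons_fires_at)
      then show ?thesis by blast
    next
      case later: False
      obtain ds'' where "fires_at y t' ts ds''"
        using Cons.IH[OF fires(3)] later upper(2) by force
      then have "fires_at y t (t' # ts) (0 # ds'')"
        using \<open>sat (grd t) y\<close> False by (auto simp: fires_at_def run_ok_Cons_fires_at)
      then show ?thesis by blast
    qed
  qed
qed

lemma fires_at_decrease:
  assumes "fires_at c t ts ds" "y \<le> c" "lbound (grd t) < y"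
  shows "\<exists>ds'. fires_at y t ts ds'"
proof (cases "rst t \<or> ts = []")
  case True
  then show ?thesis using assms by (auto simp: fires_at_def intro: sat_decrease)
next
  case False
  then obtain t' ts' d ds' where "ts = t' # ts'" "ds = d # ds'"
    using assms(1) by (cases ts; cases ds) (auto simp: fires_at_def)
  then have "fires_at y t ts ((c - y + d) # ds')"
    using assms False by (auto simp: fires_at_def run_ok_Cons_fires_at intro: sat_decrease)
  then show ?thesis by blast
qed

lemma lbound_le_clock_after_reset_free:
  assumes "run_ok v xs ds" "\<forall>s\<in>set xs. \<not> rst s" "0 \<le> v" "s \<in> set xs"
  shows "lbound (grd s) \<le> clock_after v xs ds"
  using assms
proof (induction xs arbitrary: v ds)
  case (Cons s' xs)
  obtain d ds' where ds: "ds = d # ds'"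
    using Cons.prems(1) by (cases ds) auto
  have run: "0 \<le> d" "sat (grd s') (v + d)" "run_ok (v + d) xs ds'" "\<not> rst s'"
    using Cons.prems(1,2) ds by auto
  have "v + d \<le> clock_after (v + d) xs ds'"
    using clock_after_reset_free[OF run(3)] Cons.prems(2) run_ok_nonneg[OF run(3)]
    by (simp add: sum_list_nonneg)
  moreover have "lbound (grd s') \<le> v + d"
    using lbound_le_sat[OF run(2)] Cons.prems(3) run(1) by simp
  ultimately show ?case
    using Cons.IH[OF run(3)] Cons.prems(2-4) run(1) ds run(4) by auto
qed simp

text \<open>Capping every clock value at \<open>y\<close> keeps the guards satisfied, as \<open>y\<close> exceeds all
  lower bounds.\<close>

lemma run_ok_clamp_reset_free:
  assumes "run_ok v xs ds" "\<forall>s\<in>set xs. \<not> rst s" "\<forall>s\<in>set xs. lbound (grd s) < y"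
  shows "\<exists>ds'. run_ok (min v y) xs ds' \<and> clock_after (min v y) xs ds' = min (clock_after v xs ds) y"
  using assms
proof (induction xs arbitrary: v ds)
  case (Cons s xs)
  obtain d ds' where ds: "ds = d # ds'"
    using Cons.prems(1) by (cases ds) auto
  have run: "0 \<le> d" "sat (grd s) (v + d)" "run_ok (v + d) xs ds'" "\<not> rst s"
    using Cons.prems(1,2) ds by auto
  obtain ds'' where ds'': "run_ok (min (v + d) y) xs ds''"
    "clock_after (min (v + d) y) xs ds'' = min (clock_after (v + d) xs ds') y"
    using Cons.IH[OF run(3)] Cons.prems(2,3) by auto
  have "sat (grd s) (min (v + d) y)"
    using run(2) sat_decrease[OF run(2)] Cons.prems(3) by (simp add: min_def)
  then have "run_ok (min v y) (s # xs) ((min (v + d) y - min v y) # ds'')"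
    using ds''(1) run(1,4) by (simp add: min_def)
  then show ?case
    using ds''(2) ds run(4) by (intro exI[of _ "(min (v + d) y - min v y) # ds''"]) simp
qed simp

text \<open>Without a reset since time \<open>0\<close>, the clock value at which \<open>t\<close> fires is the time at
  which it fires.\<close>

lemma Ttimes_reset_free:
  assumes "\<forall>s\<in>set pre. \<not> rst s"
  shows "Ttimes (pre @ t # post) (Suc (length pre)) =
    {c. \<exists>ds1 ds2. run_ok 0 pre ds1 \<and> clock_after 0 pre ds1 \<le> c \<and> fires_at c t post ds2}"
proof (intro equalityI subsetI)
  fix c assume "c \<in> Ttimes (pre @ t # post) (Suc (length pre))"
  then obtain ds where ds: "run_ok 0 (pre @ t # post) ds" "c = sum_list (take (Suc (length pre)) ds)"
    unfolding Ttimes_def run_along_def by blast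
  then obtain ds1 ds2' where "ds = ds1 @ ds2'" "run_ok 0 pre ds1"
    "run_ok (clock_after 0 pre ds1) (t # post) ds2'"
    unfolding run_ok_append by blast
  moreover obtain d ds2 where "ds2' = d # ds2"
    using calculation(3) by (cases ds2') auto
  moreover have "clock_after 0 pre ds1 = sum_list ds1" "length ds1 = length pre"
    using clock_after_reset_free[OF \<open>run_ok 0 pre ds1\<close> assms] run_ok_length[OF \<open>run_ok 0 pre ds1\<close>]
    by simp_all
  ultimately have "clock_after 0 pre ds1 \<le> c" "fires_at c t post ds2"
    using ds(2) by (auto simp: fires_at_def)
  then show "c \<in> {c. \<exists>ds1 ds2. run_ok 0 pre ds1 \<and> clock_after 0 pre ds1 \<le> c \<and> fires_at c t post ds2}"
    using \<open>run_ok 0 pre ds1\<close> by blast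
next
  fix c assume "c \<in> {c. \<exists>ds1 ds2. run_ok 0 pre ds1 \<and> clock_after 0 pre ds1 \<le> c \<and> fires_at c t post ds2}"
  then obtain ds1 ds2 where run: "run_ok 0 pre ds1" "clock_after 0 pre ds1 \<le> c" "fires_at c t post ds2"
    by blast
  have "clock_after 0 pre ds1 = sum_list ds1" "length ds1 = length pre"
    using clock_after_reset_free[OF run(1) assms] run_ok_length[OF run(1)] by simp_all
  moreover have "run_ok (clock_after 0 pre ds1) (t # post) ((c - sum_list ds1) # ds2)"
    using run calculation by (auto simp: fires_at_def)
  then have "run_ok 0 (pre @ t # post) (ds1 @ (c - sum_list ds1) # ds2)"
    unfolding run_ok_append using run(1) by blast
  moreover have "c = sum_list (take (Suc (length pre)) (ds1 @ (c - sum_list ds1) # ds2))"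
    using \<open>length ds1 = length pre\<close> by simp
  ultimately show "c \<in> Ttimes (pre @ t # post) (Suc (length pre))"
    unfolding Ttimes_def run_along_def by blast
qed

lemma Sup_Ttimes_reset_free:
  assumes reset_free: "\<forall>s\<in>set pre. \<not> rst s" and reachable: "reachable_path (pre @ t # post)"
  shows "Sup (ereal ` Ttimes (pre @ t # post) (Suc (length pre))) = hd (upper_adj (t # post))"
proof -
  obtain c where "c \<in> Ttimes (pre @ t # post) (Suc (length pre))"
    using Ttimes_nonempty[OF reachable] by blast
  then obtain ds1 ds2 where c: "run_ok 0 pre ds1" "clock_after 0 pre ds1 \<le> c" "fires_at c t post ds2"
    unfolding Ttimes_reset_free[OF reset_free] by blast
  show ?thesis
  proof (rule Sup_image_ereal_eqI)
    show "c \<in> Ttimes (pre @ t # post) (Suc (length pre))"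
      unfolding Ttimes_reset_free[OF reset_free] using c by blast
    show "\<forall>b\<in>Ttimes (pre @ t # post) (Suc (length pre)). ereal b \<le> hd (upper_adj (t # post))"
      unfolding Ttimes_reset_free[OF reset_free] using fires_at_le_upper_adj by blast
    show "\<forall>y. c \<le> y \<longrightarrow> ereal y < hd (upper_adj (t # post)) \<longrightarrow>
        y \<in> Ttimes (pre @ t # post) (Suc (length pre))"
      unfolding Ttimes_reset_free[OF reset_free] using c fires_at_increase
      by (blast intro: order_trans)
  qed
qed

lemma Inf_Ttimes_reset_free:
  assumes reset_free: "\<forall>s\<in>set pre. \<not> rst s" and reachable: "reachable_path (pre @ t # post)"
  shows "Inf (ereal ` Ttimes (pre @ t # post) (Suc (length pre))) =
    ereal (Max (insert 0 ((lbound \<circ> grd) ` set (pre @ [t]))))"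
    (is "_ = ereal ?L")
proof -
  obtain c where "c \<in> Ttimes (pre @ t # post) (Suc (length pre))"
    using Ttimes_nonempty[OF reachable] by blast
  then obtain ds1 ds2 where c: "run_ok 0 pre ds1" "clock_after 0 pre ds1 \<le> c" "fires_at c t post ds2"
    unfolding Ttimes_reset_free[OF reset_free] by blast
  show ?thesis
  proof (rule Inf_image_ereal_eqI)
    show "c \<in> Ttimes (pre @ t # post) (Suc (length pre))"
      unfolding Ttimes_reset_free[OF reset_free] using c by blast
    show "\<forall>b\<in>Ttimes (pre @ t # post) (Suc (length pre)). ?L \<le> b"
    proof
      fix b assume "b \<in> Ttimes (pre @ t # post) (Suc (length pre))"
      then obtain ds1 ds2 where b: "run_ok 0 pre ds1" "clock_after 0 pre ds1 \<le> b" "fires_at b t post ds2"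
        unfolding Ttimes_reset_free[OF reset_free] by blast
      have "0 \<le> b"
        using Ttimes_nonneg \<open>b \<in> Ttimes (pre @ t # post) (Suc (length pre))\<close> by blast
      moreover have "lbound (grd s) \<le> b" if "s \<in> set pre" for s
        using lbound_le_clock_after_reset_free[OF b(1) reset_free _ that] b(2) by simp
      moreover have "lbound (grd t) \<le> b"
        using b(3) \<open>0 \<le> b\<close> by (simp add: fires_at_def lbound_le_sat)
      ultimately show "?L \<le> b" by auto
    qed
    show "\<forall>y. ?L < y \<longrightarrow> y \<le> c \<longrightarrow> y \<in> Ttimes (pre @ t # post) (Suc (length pre))"
    proof (intro allI impI)
      fix y assume y: "?L < y" "y \<le> c"
      then have "0 < y" "lbound (grd t) < y" "\<forall>s\<in>set pre. lbound (grd s) < y"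
        by auto
      obtain ds2' where "fires_at y t post ds2'"
        using fires_at_decrease[OF c(3) y(2) \<open>lbound (grd t) < y\<close>] by blast
      moreover obtain ds1' where "run_ok 0 pre ds1'" "clock_after 0 pre ds1' \<le> y"
        using run_ok_clamp_reset_free[OF c(1) reset_free \<open>\<forall>s\<in>set pre. lbound (grd s) < y\<close>]
          \<open>0 < y\<close> by force
      ultimately show "y \<in> Ttimes (pre @ t # post) (Suc (length pre))"
        unfolding Ttimes_reset_free[OF reset_free] by blast
    qed
  qed
qed

lemma s_len_reset_free:
  assumes "\<forall>s\<in>set pre. \<not> rst s" and "reachable_path (pre @ t # post)"
  shows "s_len (pre @ t # post) (Suc (length pre)) = dur (pre @ t # post) (Suc (length pre))"
proof -
  define U where "U = hd (upper_adj (t # post))"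
  define L where "L = Max (insert 0 ((lbound \<circ> grd) ` set (pre @ [t])))"
  have spread: "s_len (pre @ t # post) (Suc (length pre)) = U - ereal L"
    unfolding s_len_def U_def L_def
    using Sup_Ttimes_reset_free[OF assms] Inf_Ttimes_reset_free[OF assms] by simp
  have "ereal L \<le> U"
    using Ttimes_nonempty[OF assms(2)] Inf_le_Sup
      Sup_Ttimes_reset_free[OF assms] Inf_Ttimes_reset_free[OF assms]
    unfolding U_def L_def by (metis empty_is_image)
  moreover have "upper_adj (pre @ t # post) ! length pre = U"
    using drop_upper_adj[of "length pre" "pre @ t # post"]
    unfolding U_def by (simp add: hd_drop_conv_nth[symmetric])
  moreover have "lower_adj None (pre @ t # post) ! length pre = L"
    unfolding lower_adj_None_eq_Some_0 L_def using nth_lower_adj_reset_free[OF assms(1)] .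
  ultimately show ?thesis
    unfolding spread dur_def by (cases U) auto
qed

lemma s_len_after_last_reset:
  assumes reachable: "reachable_path ts" and "m < i" "i \<le> length ts"
    and last_reset: "m = 0 \<or> rst (ts ! (m - 1))"
    and no_reset: "\<forall>j. m < j \<longrightarrow> j < i \<longrightarrow> \<not> rst (ts ! (j - 1))"
  shows "s_len ts i = s_len ts m + dur ts i"
proof -
  define pre where "pre = take (i - 1 - m) (drop m ts)"
  have length: "length (take m ts) = m" "Suc (length pre) = i - m"
    using assms(2,3) by (simp_all add: pre_def)
  have "drop (i - 1) ts = ts ! (i - 1) # drop i ts"
    using Cons_nth_drop_Suc[of "i - 1" ts] assms(2,3) by simp
  then have "drop (i - 1 - m) (drop m ts) = ts ! (i - 1) # drop i ts"
    using assms(2) by simp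
  then have rest: "drop m ts = pre @ ts ! (i - 1) # drop i ts"
    unfolding pre_def by (metis append_take_drop_id)
  have "last (take m ts) = ts ! (m - 1)" if "0 < m"
    using that assms(2,3) by (subst last_conv_nth) auto
  then have prefix: "take m ts = [] \<or> rst (last (take m ts))"
    using last_reset by auto
  have reset_free: "\<forall>s\<in>set pre. \<not> rst s"
  proof
    fix s assume "s \<in> set pre"
    then obtain k where "k < length pre" "s = ts ! (m + k)"
      using assms(2,3) by (auto simp: pre_def in_set_conv_nth)
    then show "\<not> rst s"
      using no_reset[rule_format, of "m + k + 1"] length(2) by simp
  qed
  have "s_len ts i = s_len ts m + s_len (drop m ts) (i - m)"
    using s_len_append_reset[OF prefix, of "drop m ts" "i - m"] reachable assms(2) length(1)
    by simp
  also have "s_len (drop m ts) (i - m) = dur (drop m ts) (i - m)"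
  proof -
    have "reachable_path (drop m ts)"
      using reachable_path_append_reset(2)[OF prefix, of "drop m ts"] reachable by simp
    then show ?thesis
      unfolding rest length(2)[symmetric] by (rule s_len_reset_free[OF reset_free])
  qed
  also have "dur (drop m ts) (i - m) = dur ts i"
    using dur_append_reset[OF prefix, of "i - m" "drop m ts"] assms(2) length(1) by simp
  finally show ?thesis .
qed

lemma width_0: "width ts 0 = 0"
  by (simp add: width_def)

lemma width_Suc: "width ts (Suc i) = (if rst (ts ! i) then s_len ts (Suc i) else width ts i)"
proof (cases "rst (ts ! i)")
  case True
  then have "(GREATEST j. j \<in> {1..Suc i} \<and> rst (ts ! (j - 1))) = Suc i"
    by (intro Greatest_equality) auto
  then show ?thesis
    using True unfolding width_def by force
next
  case False
  then have "(\<lambda>j. j \<in> {1..Suc i} \<and> rst (ts ! (j - 1))) = (\<lambda>j. j \<in> {1..i} \<and> rst (ts ! (j - 1)))"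
    by (auto simp: le_Suc_eq)
  moreover from this have "(\<exists>j\<in>{1..Suc i}. rst (ts ! (j - 1))) \<longleftrightarrow> (\<exists>j\<in>{1..i}. rst (ts ! (j - 1)))"
    by (metis (no_types, lifting))
  ultimately show ?thesis
    using False unfolding width_def by simp
qed

lemma width_eq_s_len_last_reset:
  assumes "reachable_path ts"
  shows "\<exists>m\<le>i. (m = 0 \<or> rst (ts ! (m - 1))) \<and> (\<forall>j. m < j \<longrightarrow> j \<le> i \<longrightarrow> \<not> rst (ts ! (j - 1))) \<and>
    width ts i = s_len ts m"
proof (induction i)
  case 0
  have "s_len ts 0 = 0"
    using Ttimes_0[OF assms] by (simp add: s_len_def)
  then show ?case
    by (simp add: width_0)
next
  case (Suc i)
  show ?case
  proof (cases "rst (ts ! i)")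
    case True
    then show ?thesis
      by (intro exI[of _ "Suc i"]) (simp add: width_Suc)
  next
    case False
    then show ?thesis
      using Suc.IH by (metis le_SucE le_SucI diff_Suc_1 width_Suc)
  qed
qed

theorem proposition1:
  fixes Q :: "'q set" and q0 :: 'q and Sig :: "'a set"
    and Tr :: "('q, 'a) trans set" and ts :: "('q, 'a) trans list"
  assumes "enta Q q0 Sig Tr"
    and "is_path Tr q0 ts"
    and "reachable_path ts"
  shows "(\<forall>i\<in>{1..length ts}. s_len ts i = width ts (i - 1) + dur ts i) \<and>
         (\<forall>i\<in>{0..length ts}. width ts i =
            (if i = 0 then 0
             else if rst (ts ! (i - 1)) then s_len ts i
             else width ts (i - 1)))"
proof (intro conjI ballI)
  fix i assume i: "i \<in> {1..length ts}"
  then obtain m where "m \<le> i - 1" "m = 0 \<or> rst (ts ! (m - 1))"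
    "\<forall>j. m < j \<longrightarrow> j \<le> i - 1 \<longrightarrow> \<not> rst (ts ! (j - 1))" "width ts (i - 1) = s_len ts m"
    using width_eq_s_len_last_reset[OF assms(3)] by blast
  then show "s_len ts i = width ts (i - 1) + dur ts i"
    using s_len_after_last_reset[OF assms(3), of m i] i by auto
next
  fix i
  show "width ts i = (if i = 0 then 0 else if rst (ts ! (i - 1)) then s_len ts i else width ts (i - 1))"
    by (cases i) (simp_all add: width_0 width_Suc)
qed

end
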